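(* Assume (A1)–(A4). Suppose $g(x_1)\le-\alpha$ for some $\alpha\in(0,\epsilon]$. Run the Algorithm with $\rho=\alpha/\sqrt{T}$ and $\eta=\frac{\xi\rho}{G_fG_g}$. Then $$\mathrm{Reg}_T\le\Big(\frac{2G_fG_gR^2}{\xi\alpha}+\frac{G_f\xi\alpha}{2G_g}+\frac{G_f\alpha}{\sigma}\Big)\sqrt{T},$$ and $g(x_t)\le0$ for all $t\in[T]$.
   Context: Let $d,T$ be positive integers and $[T]=\{1,\dots,T\}$. Write $\|\cdot\|$ for the Euclidean norm and $\mathbb{B}=\{x\in\mathbb{R}^d:\|x\|\le1\}$. For a closed convex set $\mathcal{Y}$, $\Pi_{\mathcal{Y}}$ is the Euclidean projection onto $\mathcal{Y}$. For $a\in\mathbb{R}$, $[a]_+=\max(a,0)$. Let $g:\mathbb{R}^d\to\mathbb{R}$ be convex with subdifferential $\partial g(x)$, and set $\mathcal{X}=\{x:g(x)\le0\}$. Assumptions: (A1) there is $R>0$ with $\mathcal{X}\subseteq R\mathbb{B}$; (A2) $f_1,\dots,f_T:\mathbb{R}^d\to\mathbb{R}$ are convex and differentiable, and there is $G_f>0$ with $\|\nabla f_t(x)\|\le G_f$ for all $x\in R\mathbb{B}$ and all $t\in[T]$; (A3) there is $G_g>0$ with $\|s\|\le G_g$ for all $s\in\partial g(x)$ and all $x\in R\mathbb{B}$; (A4) there are $\sigma,\epsilon>0$ such that $\mathcal{X}'=\{x:g(x)=-\epsilon\}$ is nonempty and $\|s\|\ge\sigma$ for all $s\in\partial g(x)$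 and all $x\in\mathcal{X}'$. Algorithm (OGD with Polyak feasibility steps). Inputs are $x_1\in\mathbb{R}^d$, $\eta>0$ and $\rho\ge0$. For $t=1,\dots,T$: - play $x_t$ and then receive $f_t$; the functions may be chosen adversarially and may depend on past actions; - query $g_t=g(x_t)$ and some $s_t\in\partial g(x_t)$; - set $y_t=x_t-\eta\nabla f_t(x_t)$; - if $s_t\ne0$, set $x_{t+1}=\Pi_{R\mathbb{B}}\big(y_t-\frac{[g_t+s_t^\top(y_t-x_t)+\rho]_+}{\|s_t\|^2}s_t\big)$; if $s_t=0$, set $x_{t+1}=\Pi_{R\mathbb{B}}(y_t)$. Regret is $\mathrm{Reg}_T=\sum_{t=1}^Tf_t(x_t)-\min_{x\in\mathcal{X}}\sum_{t=1}^Tf_t(x)$. Also $\gamma=1-\sigma^2/G_g^2$ and $\xi=1-\sqrt{\gamma}$. *)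

theory Defs
  imports "HOL-Analysis.Analysis"
begin

definition subdiff :: "('a::real_inner \<Rightarrow> real) \<Rightarrow> 'a \<Rightarrow> 'a set" where
  "subdiff g x = {s. \<forall>y. g y \<ge> g x + inner s (y - x)}"

text \<open>One step of OGD with Polyak feasibility steps: from the current point xt,
  gradient gr = grad f_t(xt), subgradient st of g at xt, returns x_{t+1}.
  Projection onto R*B is the Euclidean projection closest_point (cball 0 R).\<close>
definition polyak_step ::
  "real \<Rightarrow> ('a::euclidean_space \<Rightarrow> real) \<Rightarrow> real \<Rightarrow> real \<Rightarrow> 'a \<Rightarrow> 'a \<Rightarrow> 'a \<Rightarrow> 'a" where
  "polyak_step R g eta rho gr st xt =
     (let y = xt - eta *\<^sub>R gr in
      if st \<noteq> 0
      then closest_point (cball 0 R)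
             (y - (max (g xt + inner st (y - xt) + rho) 0 / (norm st)^2) *\<^sub>R st)
      else closest_point (cball 0 R) y)"

definition regret :: "nat \<Rightarrow> (nat \<Rightarrow> 'a \<Rightarrow> real) \<Rightarrow> ('a \<Rightarrow> real) \<Rightarrow> (nat \<Rightarrow> 'a) \<Rightarrow> real" where
  "regret T f g x = (\<Sum>t=1..T. f t (x t)) - (INF u\<in>{u. g u \<le> 0}. \<Sum>t=1..T. f t u)"

end

theory Submission
  imports Defs
begin

text \<open>Let \<open>C = {g \<le> -\<rho>}\<close>. Separating the epigraph of \<open>g\<close> from a halfspace yields, at the
  boundary of a sublevel set, a subgradient normal to it; together with (A4) this gives the error
  bound \<open>\<sigma> dist(y, C) \<le> [g y + \<rho>]\<^sub>+\<close>. Hence a Polyak step, a projection onto a halfspace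
  containing \<open>C\<close>, shrinks the distance to \<open>C\<close> by the factor \<open>\<surd>\<gamma>\<close>, while the gradient step
  moves by at most \<open>\<eta> G\<^sub>f = \<xi>\<rho>/G\<^sub>g\<close>; as \<open>\<xi> + \<surd>\<gamma> = 1\<close>, every iterate stays within \<open>\<rho>/G\<^sub>g\<close>
  of \<open>C\<close>, which forces \<open>g(x\<^sub>t) \<le> 0\<close>. For the regret, a feasible comparator \<open>u\<close> is within
  \<open>\<rho>/\<sigma>\<close> of some \<open>w \<in> C\<close>; both projections are nonexpansive and fix \<open>w\<close>, so the usual
  telescoping argument of online gradient descent applies against \<open>w\<close>, and replacing \<open>w\<close> by
  \<open>u\<close> costs \<open>G\<^sub>f\<rho>/\<sigma>\<close> per round.\<close>

lemma convex_on_has_derivative_ge: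
  fixes f :: "'a::real_inner \<Rightarrow> real"
  assumes cf: "convex_on UNIV f" and df: "(f has_derivative (\<lambda>h. inner D h)) (at u)"
  shows "f u + inner D (w - u) \<le> f w"
proof -
  define \<phi> where "\<phi> = (\<lambda>\<tau>::real. f (u + \<tau> *\<^sub>R (w - u)))"
  have "convex_on UNIV \<phi>"
  proof (rule convex_onI)
    fix t a b :: real assume "0 < t" "t < 1"
    then have "f ((1 - t) *\<^sub>R (u + a *\<^sub>R (w - u)) + t *\<^sub>R (u + b *\<^sub>R (w - u)))
                 \<le> (1 - t) * \<phi> a + t * \<phi> b"
      unfolding \<phi>_def by (intro convex_onD[OF cf]) auto
    then show "\<phi> ((1 - t) *\<^sub>R a + t *\<^sub>R b) \<le> (1 - t) * \<phi> a + t * \<phi> b"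
      unfolding \<phi>_def by (simp add: algebra_simps)
  qed simp
  moreover have "(\<phi> has_field_derivative inner D (w - u)) (at 0)"
  proof -
    have "((\<lambda>\<tau>::real. u + \<tau> *\<^sub>R (w - u)) has_derivative (\<lambda>h. h *\<^sub>R (w - u))) (at 0)"
      by (auto intro!: derivative_eq_intros)
    moreover have "(f has_derivative (\<lambda>h. inner D h)) (at (u + 0 *\<^sub>R (w - u)))"
      using df by simp
    ultimately have "(\<phi> has_derivative (\<lambda>h. inner D (h *\<^sub>R (w - u)))) (at 0)"
      unfolding \<phi>_def by (rule has_derivative_compose)
    then show ?thesis
      by (simp add: has_field_derivative_def mult.commute[of _ "inner D (w - u)"])
  qed
  ultimately have "inner D (w - u) * (1 - 0) \<le> \<phi> 1 - \<phi> 0"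
    by (intro convex_on_imp_above_tangent) auto
  then show ?thesis unfolding \<phi>_def by simp
qed

lemma convex_sublevel:
  fixes g :: "'a::real_vector \<Rightarrow> real"
  assumes "convex_on UNIV g"
  shows "convex {u. g u \<le> b}"
proof (rule convexI)
  fix u v :: 'a and a b' :: real
  assume "u \<in> {u. g u \<le> b}" "v \<in> {u. g u \<le> b}" "0 \<le> a" "0 \<le> b'" "a + b' = 1"
  then show "a *\<^sub>R u + b' *\<^sub>R v \<in> {u. g u \<le> b}"
    using convex_onD[OF assms, of b' u v] convex_bound_le[of "g u" b "g v" a b']
    by (simp add: eq_diff_eq[symmetric])
qed

lemma epigraph_bounded_functional_neg:
  fixes g :: "'a::real_inner \<Rightarrow> real"
  assumes bounded: "\<And>y t. g y \<le> t \<Longrightarrow> inner w y + \<beta> * t \<le> c" and nz: "(w, \<beta>) \<noteq> 0"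
  shows "\<beta> < 0"
proof (rule ccontr)
  assume "\<not> \<beta> < 0"
  then consider "\<beta> > 0" | "\<beta> = 0" by linarith
  then show False
  proof cases
    case 1
    define k where "k = (\<bar>c\<bar> + \<bar>\<beta> * g 0\<bar> + 1) / \<beta>"
    have "inner w 0 + \<beta> * (g 0 + k) \<le> c"
      using 1 by (intro bounded) (simp add: k_def)
    moreover have "\<beta> * k = \<bar>c\<bar> + \<bar>\<beta> * g 0\<bar> + 1" using 1 by (simp add: k_def)
    ultimately show False by (simp add: algebra_simps)
  next
    case 2
    with nz have "w \<noteq> 0" by (simp add: zero_prod_def)
    define y where "y = ((\<bar>c\<bar> + 1) / inner w w) *\<^sub>R w"
    have "inner w y + \<beta> * g y \<le> c" by (rule bounded) simp
    moreover have "inner w y = \<bar>c\<bar> + 1" using \<open>w \<noteq> 0\<close> by (simp add: y_def)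
    ultimately show False using 2 by simp
  qed
qed

lemma inner_nonneg_on_halfspace_imp_aligned:
  fixes v e :: "'a::real_inner"
  assumes "\<And>d. inner d e > 0 \<Longrightarrow> inner v d \<ge> 0"
  shows "norm v * norm e \<le> inner v e"
proof (rule ccontr)
  assume less: "\<not> ?thesis"
  then have "v \<noteq> 0" "e \<noteq> 0" by auto
  define d where "d = norm v *\<^sub>R e - norm e *\<^sub>R v"
  have "inner d e = norm e * (norm v * norm e - inner v e)"
    by (simp add: d_def inner_diff_left power2_norm_eq_inner[symmetric] power2_eq_square algebra_simps)
  also have "\<dots> > 0" using less \<open>e \<noteq> 0\<close> by simp
  finally have "inner v d \<ge> 0" by (rule assms)
  moreover have "inner v d = norm v * (inner v e - norm v * norm e)"
    by (simp add: d_def inner_diff_right power2_norm_eq_inner[symmetric] power2_eq_square algebra_simps)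
  moreover have "norm v * (inner v e - norm v * norm e) < 0"
    using less \<open>v \<noteq> 0\<close> by (simp add: mult_pos_neg)
  ultimately show False by simp
qed

lemma separating_affine_minorant:
  fixes g :: "'a::euclidean_space \<Rightarrow> real"
  assumes conv: "convex_on UNIV g" and e: "e \<noteq> 0"
    and above: "\<And>y. inner (y - q) e > 0 \<Longrightarrow> b \<le> g y"
  shows "\<exists>v c. (\<forall>y. inner v y - c \<le> g y) \<and> (\<forall>y. inner (y - q) e > 0 \<longrightarrow> c \<le> inner v y - b)"
proof -
  define F where "F = {z::'a \<times> real. inner (fst z - q) e > 0 \<and> snd z < b}"
  have "convex F"
  proof -
    have "F = {z. inner (e, 0::real) z > inner q e} \<inter> {z. inner (0::'a, 1::real) z < b}"
      by (auto simp: F_def inner_prod_def inner_diff_left inner_commute[of e])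
    then show ?thesis by (simp add: convex_Int convex_halfspace_gt convex_halfspace_lt)
  qed
  moreover have "(q + e, b - 1) \<in> F"
    using e by (simp add: F_def)
  moreover have "(0, g 0) \<in> epigraph UNIV g" by (simp add: epigraph_def)
  moreover have "epigraph UNIV g \<inter> F = {}"
    using above by (force simp: epigraph_def F_def)
  ultimately obtain a c where a: "a \<noteq> 0" and E: "\<forall>z\<in>epigraph UNIV g. inner a z \<le> c"
    and F: "\<forall>z\<in>F. c \<le> inner a z"
    using separating_hyperplane_sets[OF convex_epigraphI[OF conv]] by blast
  obtain w \<beta> where w\<beta>: "a = (w, \<beta>)" by (cases a)
  have E': "inner w y + \<beta> * t \<le> c" if "g y \<le> t" for y t
    using E that by (auto simp: w\<beta> epigraph_def inner_prod_def)
  have \<beta>: "\<beta> < 0" using epigraph_bounded_functional_neg[OF E'] a w\<beta> by blast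
  define v where "v = (- 1 / \<beta>) *\<^sub>R w"
  have "inner v y - c / (- \<beta>) \<le> g y" for y
    using E'[of y "g y"] \<beta> by (simp add: v_def field_simps)
  moreover have "b \<le> inner v y - c / (- \<beta>)" if "inner (y - q) e > 0" for y
  proof (rule dense_le_bounded[of "b - 1" b])
    fix t assume "b - 1 < t" "t < b"
    then have "c \<le> inner w y + \<beta> * t" using F that by (auto simp: F_def w\<beta> inner_prod_def)
    then show "t \<le> inner v y - c / (- \<beta>)" using \<beta> by (simp add: v_def field_simps)
  qed simp
  ultimately show ?thesis
    by (intro exI[of _ v] exI[of _ "c / (- \<beta>)"]) (auto simp: algebra_simps)
qed

text \<open>By the equality case of Cauchy-Schwarz, the last conjunct says that \<open>v\<close> is a nonnegative
  multiple of \<open>x - q\<close>.\<close>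

lemma subgradient_normal_to_sublevel:
  fixes g :: "'a::euclidean_space \<Rightarrow> real"
  assumes conv: "convex_on UNIV g" and ne: "{u. g u \<le> b} \<noteq> {}" and gx: "g x > b"
  shows "\<exists>q v. g q = b \<and> v \<in> subdiff g q \<and> norm v * norm (x - q) \<le> inner v (x - q)"
proof -
  define C where "C = {u. g u \<le> b}"
  have clC: "closed C"
    unfolding C_def by (intro closed_Collect_le convex_on_continuous[OF open_UNIV conv]) simp
  have cvC: "convex C" unfolding C_def by (rule convex_sublevel[OF conv])
  have neC: "C \<noteq> {}" using ne by (simp add: C_def)
  define q where "q = closest_point C x"
  have qC: "g q \<le> b" using closest_point_in_set[OF clC neC, of x] by (simp add: q_def C_def)
  have normal: "inner (x - q) (y - q) \<le> 0" if "y \<in> C" for y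
    using closest_point_dot[OF cvC clC that] by (simp add: q_def)
  define e where "e = x - q"
  have e: "e \<noteq> 0" using qC gx by (auto simp: e_def)
  have "b \<le> g y" if "inner (y - q) e > 0" for y
    using normal[of y] that by (force simp: C_def e_def inner_commute)
  then obtain v c where minor: "\<And>y. inner v y - c \<le> g y"
    and half: "\<And>y. inner (y - q) e > 0 \<Longrightarrow> c \<le> inner v y - b"
    using separating_affine_minorant[OF conv e] by blast
  \<comment> \<open>\<open>\<kappa>\<close> is the slack of the minorant at \<open>q\<close>; moving from \<open>q\<close> along \<open>e\<close> shows it vanishes.\<close>
  define \<kappa> where "\<kappa> = c - (inner v q - b)"
  have \<kappa>0: "0 \<le> \<kappa>" using minor[of q] qC by (simp add: \<kappa>_def)
  have gap: "\<kappa> \<le> inner v d" if "inner d e > 0" for d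
    using half[of "q + d"] that by (simp add: \<kappa>_def inner_add_right)
  have "\<kappa> \<le> 0"
  proof (rule field_le_epsilon)
    fix \<delta> :: real assume "\<delta> > 0"
    define \<tau> where "\<tau> = \<delta> / (inner v e + 1)"
    have ve: "0 \<le> inner v e" using gap[of e] \<kappa>0 e by simp
    then have "\<tau> > 0" using \<open>\<delta> > 0\<close> by (simp add: \<tau>_def)
    then have "\<kappa> \<le> \<tau> * inner v e" using gap[of "\<tau> *\<^sub>R e"] e by simp
    also have "\<dots> \<le> \<delta>" using ve \<open>\<delta> > 0\<close> by (simp add: \<tau>_def field_simps)
    finally show "\<kappa> \<le> 0 + \<delta>" by simp
  qed
  then have sub: "b + inner v (y - q) \<le> g y" for y
    using minor[of y] \<kappa>0 by (simp add: \<kappa>_def inner_diff_right)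
  then have "g q = b" using sub[of q] qC by simp
  moreover have "norm v * norm e \<le> inner v e"
    using gap \<kappa>0 by (intro inner_nonneg_on_halfspace_imp_aligned) (meson order_trans)
  ultimately show ?thesis using sub by (auto simp: subdiff_def e_def)
qed

lemma sublevel_error_bound:
  fixes g :: "'a::euclidean_space \<Rightarrow> real"
  assumes conv: "convex_on UNIV g" and ne: "{u. g u \<le> b} \<noteq> {}"
    and sharp: "\<And>u v. g u = b \<Longrightarrow> v \<in> subdiff g u \<Longrightarrow> \<sigma> \<le> norm v"
    and "b \<le> a" "a \<le> g x"
  shows "\<exists>w. g w \<le> a \<and> \<sigma> * norm (x - w) \<le> g x - a"
proof (cases "g x \<le> b")
  case True
  then show ?thesis using assms(4,5) by (intro exI[of _ x]) auto
next
  case False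
  then obtain q v where gq: "g q = b" and v: "v \<in> subdiff g q"
    and aligned: "norm v * norm (x - q) \<le> inner v (x - q)"
    using subgradient_normal_to_sublevel[OF conv ne] by force
  have "\<sigma> * norm (x - q) \<le> norm v * norm (x - q)"
    using sharp[OF gq v] by (simp add: mult_right_mono)
  moreover have "g q + inner v (x - q) \<le> g x" using v by (simp add: subdiff_def)
  ultimately have dist_q: "\<sigma> * norm (x - q) \<le> g x - b" using aligned gq by linarith
  define \<theta> where "\<theta> = (g x - a) / (g x - b)"
  have \<theta>: "0 \<le> \<theta>" "\<theta> \<le> 1" using False assms(4,5) by (auto simp: \<theta>_def)
  define w where "w = (1 - \<theta>) *\<^sub>R x + \<theta> *\<^sub>R q"
  have "g w \<le> (1 - \<theta>) * g x + \<theta> * g q"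
    unfolding w_def using \<theta> by (intro convex_onD[OF conv]) auto
  also have "\<dots> = g x - \<theta> * (g x - b)" using gq by (simp add: algebra_simps)
  also have "\<dots> = a" using False by (simp add: \<theta>_def)
  finally have "g w \<le> a" .
  have "\<sigma> * norm (x - w) = \<theta> * (\<sigma> * norm (x - q))"
    using \<theta> by (simp add: w_def algebra_simps flip: scaleR_diff_right)
  also have "\<dots> \<le> \<theta> * (g x - b)" using dist_q \<theta> by (simp add: mult_left_mono)
  also have "\<dots> = g x - a" using False by (simp add: \<theta>_def)
  finally show ?thesis using \<open>g w \<le> a\<close> by blast
qed

text \<open>For \<open>s \<noteq> 0\<close> this is the Euclidean projection onto the halfspace
  \<open>{y. inner s y + k \<le> 0}\<close>.\<close>

definition halfspace_proj :: "'a::real_inner \<Rightarrow> real \<Rightarrow> 'a \<Rightarrow> 'a" where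
  "halfspace_proj s k y = y - (max (inner s y + k) 0 / (norm s)^2) *\<^sub>R s"

lemma halfspace_proj_fixed: "inner s y + k \<le> 0 \<Longrightarrow> halfspace_proj s k y = y"
  by (simp add: halfspace_proj_def)

lemma max0_diff_sq_le: "(max (a::real) 0 - max b 0)^2 \<le> (max a 0 - max b 0) * (a - b)"
  by (cases "a \<ge> 0"; cases "b \<ge> 0")
    (auto simp: power2_eq_square algebra_simps mult_nonneg_nonpos mult_nonpos_nonneg)

lemma halfspace_proj_nonexpansive:
  fixes s :: "'a::real_inner"
  assumes "s \<noteq> 0"
  shows "norm (halfspace_proj s k y1 - halfspace_proj s k y2) \<le> norm (y1 - y2)"
proof -
  define h1 h2 where "h1 = inner s y1 + k" and "h2 = inner s y2 + k"
  define m where "m = max h1 0 - max h2 0"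
  define n where "n = (norm s)^2"
  have n: "n > 0" "inner s s = n" using assms by (simp_all add: n_def power2_norm_eq_inner)
  have "halfspace_proj s k y1 - halfspace_proj s k y2 = (y1 - y2) - (m / n) *\<^sub>R s"
    by (simp add: halfspace_proj_def h1_def h2_def m_def n_def algebra_simps diff_divide_distrib)
  moreover have "norm ((y1 - y2) - (m / n) *\<^sub>R s)^2 = norm (y1 - y2)^2 - (2 * m * (h1 - h2) - m^2) / n"
    unfolding power2_norm_eq_inner using n
    by (simp add: h1_def h2_def inner_diff_left inner_diff_right inner_commute power2_eq_square
        algebra_simps) (simp add: field_simps)
  moreover have "0 \<le> 2 * m * (h1 - h2) - m^2"
    using max0_diff_sq_le[of h1 h2] zero_le_power2[of m] unfolding m_def by linarith
  then have "0 \<le> (2 * m * (h1 - h2) - m^2) / n" using n by simp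
  ultimately have "norm (halfspace_proj s k y1 - halfspace_proj s k y2)^2 \<le> norm (y1 - y2)^2"
    by simp
  then show ?thesis by (rule power2_le_imp_le) simp
qed

lemma halfspace_proj_dist_sq:
  fixes s :: "'a::real_inner"
  assumes "s \<noteq> 0" and y: "0 \<le> inner s y + k" and c: "inner s c + k \<le> 0"
  shows "norm (halfspace_proj s k y - c)^2 \<le> norm (y - c)^2 - (inner s y + k)^2 / (norm s)^2"
proof -
  define h where "h = inner s y + k"
  define n where "n = (norm s)^2"
  have n: "n > 0" "inner s s = n" using assms(1) by (simp_all add: n_def power2_norm_eq_inner)
  have "norm (halfspace_proj s k y - c)^2 = norm ((y - c) - (h / n) *\<^sub>R s)^2"
    using y by (simp add: halfspace_proj_def h_def n_def algebra_simps)
  also have "\<dots> = norm (y - c)^2 - 2 * (h / n) * inner s (y - c) + h^2 / n"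
    unfolding power2_norm_eq_inner using n
    by (simp add: inner_diff_left inner_diff_right inner_commute power2_eq_square algebra_simps)
      (simp add: field_simps)
  also have "\<dots> \<le> norm (y - c)^2 - 2 * (h / n) * h + h^2 / n"
  proof -
    have "h \<le> inner s (y - c)" using c by (simp add: h_def inner_diff_right)
    moreover have "0 \<le> 2 * (h / n)" using n y by (simp add: h_def)
    ultimately have "2 * (h / n) * h \<le> 2 * (h / n) * inner s (y - c)" by (rule mult_left_mono)
    then show ?thesis by linarith
  qed
  also have "\<dots> = norm (y - c)^2 - h^2 / n" by (simp add: power2_eq_square)
  finally show ?thesis by (simp add: h_def n_def)
qed

lemma polyak_step_eq:
  "polyak_step R g \<eta> \<rho> gr s x =
     closest_point (cball 0 R)
       (if s = 0 then x - \<eta> *\<^sub>R gr else halfspace_proj s (g x - inner s x + \<rho>) (x - \<eta> *\<^sub>R gr))"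
  by (simp add: polyak_step_def halfspace_proj_def Let_def inner_diff_right algebra_simps)

locale polyak_ogd =
  fixes g :: "'a::euclidean_space \<Rightarrow> real"
    and f :: "nat \<Rightarrow> 'a \<Rightarrow> real"
    and df :: "nat \<Rightarrow> 'a \<Rightarrow> 'a"
    and x s :: "nat \<Rightarrow> 'a"
    and T :: nat
    and R G_f G_g \<sigma> \<epsilon> \<rho> \<eta> :: real
  assumes g_convex: "convex_on UNIV g"
    and feasible_in_ball: "{u. g u \<le> 0} \<subseteq> cball 0 R"
    and f_convex: "\<And>t. convex_on UNIV (f t)"
    and f_grad: "\<And>t u. (f t has_derivative (\<lambda>h. inner (df t u) h)) (at u)"
    and grad_bound: "\<And>t u. t \<in> {1..T} \<Longrightarrow> u \<in> cball 0 R \<Longrightarrow> norm (df t u) \<le> G_f"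
    and G_g_pos: "G_g > 0"
    and subgrad_bound: "\<And>u v. u \<in> cball 0 R \<Longrightarrow> v \<in> subdiff g u \<Longrightarrow> norm v \<le> G_g"
    and \<sigma>_pos: "\<sigma> > 0"
    and level_nonempty: "{u. g u = - \<epsilon>} \<noteq> {}"
    and level_subgrad_bound: "\<And>u v. g u = - \<epsilon> \<Longrightarrow> v \<in> subdiff g u \<Longrightarrow> \<sigma> \<le> norm v"
    and \<rho>_pos: "\<rho> > 0" and \<rho>_le: "\<rho> \<le> \<epsilon>"
    and init: "g (x 1) \<le> - \<rho>"
    and \<eta>_pos: "\<eta> > 0"
    and step_size: "\<eta> * G_f \<le> (1 - sqrt (1 - \<sigma>^2 / G_g^2)) * \<rho> / G_g"
    and subgr: "\<And>t. t \<in> {1..T} \<Longrightarrow> s t \<in> subdiff g (x t)"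
    and step: "\<And>t. t \<in> {1..T} \<Longrightarrow> x (t + 1) = polyak_step R g \<eta> \<rho> (df t (x t)) (s t) (x t)"
begin

definition tightened :: "'a set" where
  "tightened = {u. g u \<le> - \<rho>}"

lemma x1_tightened: "x 1 \<in> tightened"
  using init by (simp add: tightened_def)

lemma tightened_in_ball: "tightened \<subseteq> cball 0 R"
  using feasible_in_ball \<rho>_pos by (force simp: tightened_def)

lemma closed_tightened: "closed tightened"
  unfolding tightened_def
  by (intro closed_Collect_le convex_on_continuous[OF open_UNIV g_convex]) simp

lemma subgradient_ineq: "t \<in> {1..T} \<Longrightarrow> g (x t) + inner (s t) (u - x t) \<le> g u"
  using subgr by (simp add: subdiff_def)

lemma level_sublevel_nonempty: "{u. g u \<le> - \<epsilon>} \<noteq> {}"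
  using level_nonempty by (metis (mono_tags) Collect_empty_eq order_refl)

lemma \<sigma>_le_G_g: "\<sigma> \<le> G_g"
proof -
  obtain b :: 'a where b: "b \<in> Basis" using nonempty_Basis by blast
  have "(\<bar>R\<bar> + 1) *\<^sub>R b \<notin> cball 0 R" using b by simp
  then have "\<not> g ((\<bar>R\<bar> + 1) *\<^sub>R b) \<le> 0" using feasible_in_ball by blast
  then have "g ((\<bar>R\<bar> + 1) *\<^sub>R b) > - \<epsilon>" using \<rho>_pos \<rho>_le by linarith
  then obtain q v where q: "g q = - \<epsilon>" and v: "v \<in> subdiff g q"
    using subgradient_normal_to_sublevel[OF g_convex level_sublevel_nonempty] by blast
  have "q \<in> cball 0 R" using feasible_in_ball q \<rho>_pos \<rho>_le by force
  then show ?thesis using subgrad_bound[OF _ v] level_subgrad_bound[OF q v] by linarith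
qed

lemma contraction_factor_nonneg: "0 \<le> 1 - \<sigma>^2 / G_g^2"
  using \<sigma>_le_G_g \<sigma>_pos G_g_pos by (simp add: field_simps power_mono)

lemma sigma_infdist_tightened: "\<sigma> * infdist y tightened \<le> max (g y + \<rho>) 0"
proof (cases "g y \<le> - \<rho>")
  case True
  then show ?thesis by (simp add: infdist_zero tightened_def)
next
  case False
  then obtain w where "g w \<le> - \<rho>" and w: "\<sigma> * norm (y - w) \<le> g y + \<rho>"
    using sublevel_error_bound[of g "- \<epsilon>" \<sigma> "- \<rho>" y] g_convex level_sublevel_nonempty
      level_subgrad_bound \<rho>_le by auto
  then have "infdist y tightened \<le> norm (y - w)"
    using infdist_le[of w tightened y] by (simp add: tightened_def dist_norm)
  then show ?thesis using w \<sigma>_pos by (smt (verit) mult_left_mono)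
qed

text \<open>The Polyak step projects onto \<open>{y. inner (s t) y + polyak_cut t \<le> 0}\<close>, the halfspace
  where the linearisation of \<open>g + \<rho>\<close> at \<open>x t\<close> is nonpositive.\<close>

definition polyak_cut :: "nat \<Rightarrow> real" where
  "polyak_cut t = g (x t) - inner (s t) (x t) + \<rho>"

definition pre_iterate :: "nat \<Rightarrow> 'a" where
  "pre_iterate t =
     (if s t = 0 then x t - \<eta> *\<^sub>R df t (x t)
      else halfspace_proj (s t) (polyak_cut t) (x t - \<eta> *\<^sub>R df t (x t)))"

lemma next_iterate: "t \<in> {1..T} \<Longrightarrow> x (t + 1) = closest_point (cball 0 R) (pre_iterate t)"
  using step by (simp add: polyak_step_eq pre_iterate_def polyak_cut_def)

lemma tightened_in_cut:
  assumes "t \<in> {1..T}" "w \<in> tightened"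
  shows "inner (s t) w + polyak_cut t \<le> 0"
  using subgradient_ineq[OF assms(1), of w] assms(2)
  by (simp add: polyak_cut_def tightened_def inner_diff_right)

lemma ball_nonempty: "cball (0::'a) R \<noteq> {}"
  using x1_tightened tightened_in_ball by blast

lemma dist_ball_proj_le:
  fixes w z :: 'a
  shows "w \<in> cball 0 R \<Longrightarrow> dist (closest_point (cball 0 R) z) w \<le> dist z w"
  using closest_point_lipschitz[OF convex_cball closed_cball ball_nonempty, of z w]
  by (simp add: closest_point_self)

lemma infdist_ball_proj_le: "infdist (closest_point (cball 0 R) z) tightened \<le> infdist z tightened"
proof -
  obtain c where c: "c \<in> tightened" "infdist z tightened = dist z c"
    using infdist_attains_inf[OF closed_tightened] x1_tightened by blast
  then have "dist (closest_point (cball 0 R) z) c \<le> dist z c"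
    using tightened_in_ball by (intro dist_ball_proj_le) blast
  then show ?thesis using infdist_le[OF c(1), of "closest_point (cball 0 R) z"] c(2) by linarith
qed

lemma polyak_proj_contracts:
  assumes t: "t \<in> {1..T}" and xt: "x t \<in> cball 0 R" and st: "s t \<noteq> 0"
  shows "infdist (halfspace_proj (s t) (polyak_cut t) (x t)) tightened
           \<le> sqrt (1 - \<sigma>^2 / G_g^2) * infdist (x t) tightened"
proof (cases "g (x t) + \<rho> \<le> 0")
  case True
  then show ?thesis by (simp add: halfspace_proj_fixed polyak_cut_def infdist_zero tightened_def)
next
  case False
  define \<delta> where "\<delta> = g (x t) + \<rho>"
  have \<delta>: "inner (s t) (x t) + polyak_cut t = \<delta>" by (simp add: \<delta>_def polyak_cut_def)
  obtain c where c: "c \<in> tightened" and r: "infdist (x t) tightened = norm (x t - c)"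
    using infdist_attains_inf[OF closed_tightened] x1_tightened by (metis dist_norm empty_iff)
  define r where "r = norm (x t - c)"
  have "\<sigma> * r \<le> \<delta>" using sigma_infdist_tightened[of "x t"] False by (simp add: r r_def \<delta>_def)
  then have "(\<sigma> * r)^2 \<le> \<delta>^2" using \<sigma>_pos by (simp add: r_def power_mono)
  have "norm (halfspace_proj (s t) (polyak_cut t) (x t) - c)^2 \<le> r^2 - \<delta>^2 / (norm (s t))^2"
    using halfspace_proj_dist_sq[OF st _ tightened_in_cut[OF t c], of "x t"] False
    unfolding \<delta> r_def \<delta>_def by simp
  also have "\<dots> \<le> r^2 - \<delta>^2 / G_g^2"
    using subgrad_bound[OF xt subgr[OF t]] st by (simp add: frac_le power_mono)
  also have "\<dots> \<le> r^2 - (\<sigma> * r)^2 / G_g^2"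
    using \<open>(\<sigma> * r)^2 \<le> \<delta>^2\<close> by (simp add: divide_right_mono)
  also have "\<dots> = (1 - \<sigma>^2 / G_g^2) * r^2" using G_g_pos by (simp add: field_simps power2_eq_square)
  finally have "norm (halfspace_proj (s t) (polyak_cut t) (x t) - c)
                 \<le> sqrt ((1 - \<sigma>^2 / G_g^2) * r^2)"
    by (rule real_le_rsqrt)
  also have "\<dots> = sqrt (1 - \<sigma>^2 / G_g^2) * r" by (simp add: real_sqrt_mult r_def)
  finally show ?thesis
    using infdist_le[OF c, of "halfspace_proj (s t) (polyak_cut t) (x t)"] by (simp add: r r_def dist_norm)
qed

lemma pre_iterate_near_tightened:
  assumes t: "t \<in> {1..T}" and xt: "x t \<in> cball 0 R" and near: "infdist (x t) tightened \<le> \<rho> / G_g"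
  shows "infdist (pre_iterate t) tightened \<le> \<rho> / G_g"
proof -
  define y where "y = x t - \<eta> *\<^sub>R df t (x t)"
  define \<kappa> where "\<kappa> = sqrt (1 - \<sigma>^2 / G_g^2)"
  have \<kappa>: "0 \<le> \<kappa>" using contraction_factor_nonneg by (simp add: \<kappa>_def)
  have "dist y (x t) = \<eta> * norm (df t (x t))" using \<eta>_pos by (simp add: y_def dist_norm)
  also have "\<dots> \<le> \<eta> * G_f" using grad_bound[OF t xt] \<eta>_pos by (simp add: mult_left_mono)
  finally have move: "dist y (x t) \<le> (1 - \<kappa>) * \<rho> / G_g" using step_size by (simp add: \<kappa>_def)
  show ?thesis
  proof (cases "s t = 0")
    case True
    then have "g (x t) \<le> g (x 1)" using subgradient_ineq[OF t, of "x 1"] by simp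
    then have "infdist (x t) tightened = 0" using init by (simp add: infdist_zero tightened_def)
    then have "infdist y tightened \<le> (1 - \<kappa>) * \<rho> / G_g"
      using infdist_triangle[of y tightened "x t"] move by linarith
    also have "\<dots> \<le> \<rho> / G_g" using \<kappa> \<rho>_pos G_g_pos by (simp add: divide_right_mono)
    finally show ?thesis using True by (simp add: pre_iterate_def y_def)
  next
    case False
    define P where "P = halfspace_proj (s t) (polyak_cut t)"
    have "infdist (P y) tightened \<le> infdist (P (x t)) tightened + dist (P y) (P (x t))"
      by (rule infdist_triangle)
    also have "\<dots> \<le> \<kappa> * infdist (x t) tightened + dist y (x t)"
      using polyak_proj_contracts[OF t xt False] halfspace_proj_nonexpansive[OF False]
      by (intro add_mono) (simp_all add: P_def \<kappa>_def dist_norm)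
    also have "\<dots> \<le> \<kappa> * (\<rho> / G_g) + (1 - \<kappa>) * \<rho> / G_g"
      using near move \<kappa> by (intro add_mono mult_left_mono)
    also have "\<dots> = \<rho> / G_g" using G_g_pos by (simp add: field_simps)
    finally show ?thesis using False by (simp add: pre_iterate_def y_def P_def)
  qed
qed

lemma iterate_invariant:
  assumes "1 \<le> t" "t \<le> Suc T"
  shows "x t \<in> cball 0 R \<and> infdist (x t) tightened \<le> \<rho> / G_g"
  using assms
proof (induction t rule: dec_induct)
  case base
  then show ?case using x1_tightened tightened_in_ball \<rho>_pos G_g_pos by (auto simp: infdist_zero)
next
  case (step n)
  then have n: "n \<in> {1..T}" by simp
  have "x (Suc n) \<in> cball 0 R"
    using next_iterate[OF n] closest_point_in_set[OF closed_cball ball_nonempty] by simp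
  moreover have "infdist (x (Suc n)) tightened \<le> infdist (pre_iterate n) tightened"
    using next_iterate[OF n] infdist_ball_proj_le by simp
  moreover have "x n \<in> cball 0 R" "infdist (x n) tightened \<le> \<rho> / G_g" using step by simp_all
  ultimately show ?case using pre_iterate_near_tightened[OF n] by fastforce
qed

lemma iterate_in_ball: "t \<in> {1..T} \<Longrightarrow> x t \<in> cball 0 R"
  using iterate_invariant[of t] by simp

lemma iterate_near_tightened: "t \<in> {1..T} \<Longrightarrow> infdist (x t) tightened \<le> \<rho> / G_g"
  using iterate_invariant[of t] by simp

theorem iterates_feasible:
  assumes t: "t \<in> {1..T}"
  shows "g (x t) \<le> 0"
proof -
  obtain c where c: "c \<in> tightened" and dc: "infdist (x t) tightened = dist (x t) c"
    using infdist_attains_inf[OF closed_tightened] x1_tightened by blast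
  have "norm (s t) * norm (c - x t) \<le> G_g * (\<rho> / G_g)"
    using subgrad_bound[OF iterate_in_ball[OF t] subgr[OF t]] iterate_near_tightened[OF t] dc G_g_pos
    by (intro mult_mono) (auto simp: dist_norm norm_minus_commute)
  then have "- \<rho> \<le> inner (s t) (c - x t)"
    using Cauchy_Schwarz_ineq2[of "s t" "c - x t"] G_g_pos by (simp add: abs_le_iff)
  then show ?thesis using subgradient_ineq[OF t, of c] c by (simp add: tightened_def)
qed

lemma next_iterate_closer:
  assumes t: "t \<in> {1..T}" and w: "w \<in> tightened"
  shows "norm (x (t + 1) - w) \<le> norm (x t - \<eta> *\<^sub>R df t (x t) - w)"
proof -
  have wR: "w \<in> cball 0 R" using w tightened_in_ball by (rule subsetD[rotated])
  then have "norm (x (t + 1) - w) \<le> norm (pre_iterate t - w)"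
    using next_iterate[OF t] dist_ball_proj_le[OF wR, of "pre_iterate t"] by (simp add: dist_norm)
  also have "\<dots> \<le> norm (x t - \<eta> *\<^sub>R df t (x t) - w)"
  proof (cases "s t = 0")
    case False
    then show ?thesis
      using halfspace_proj_nonexpansive[OF False, of "polyak_cut t" "x t - \<eta> *\<^sub>R df t (x t)" w]
        halfspace_proj_fixed[OF tightened_in_cut[OF t w]]
      by (simp add: pre_iterate_def)
  qed (simp add: pre_iterate_def)
  finally show ?thesis .
qed

lemma round_loss_vs_tightened:
  assumes t: "t \<in> {1..T}" and w: "w \<in> tightened"
  shows "f t (x t) - f t w
           \<le> (norm (x t - w)^2 - norm (x (t + 1) - w)^2) / (2 * \<eta>) + \<eta> * G_f^2 / 2"
proof -
  define d where "d = df t (x t)"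
  have "norm (x (t + 1) - w)^2 \<le> norm ((x t - w) - \<eta> *\<^sub>R d)^2"
    using next_iterate_closer[OF t w] by (simp add: d_def power_mono algebra_simps)
  also have "\<dots> = norm (x t - w)^2 - 2 * \<eta> * inner d (x t - w) + \<eta>^2 * norm d^2"
    unfolding power2_norm_eq_inner
    by (simp add: inner_diff_left inner_diff_right inner_commute power2_eq_square algebra_simps)
  also have "\<dots> \<le> norm (x t - w)^2 - 2 * \<eta> * inner d (x t - w) + \<eta>^2 * G_f^2"
    using grad_bound[OF t iterate_in_ball[OF t]] by (simp add: d_def power_mono mult_left_mono)
  finally have "inner d (x t - w)
                  \<le> (norm (x t - w)^2 - norm (x (t + 1) - w)^2) / (2 * \<eta>) + \<eta> * G_f^2 / 2"
    using \<eta>_pos by (simp add: field_simps power2_eq_square)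
  moreover have "f t (x t) + inner d (w - x t) \<le> f t w"
    unfolding d_def by (rule convex_on_has_derivative_ge[OF f_convex f_grad])
  ultimately show ?thesis by (simp add: inner_diff_right)
qed

lemma cumulative_loss_vs_tightened:
  assumes w: "w \<in> tightened"
  shows "(\<Sum>t=1..T. f t (x t) - f t w) \<le> 2 * R^2 / \<eta> + real T * (\<eta> * G_f^2 / 2)"
proof -
  define a where "a t = norm (x t - w)^2" for t
  have "(\<Sum>t=1..T. f t (x t) - f t w) \<le> (\<Sum>t=1..T. (a t - a (Suc t)) / (2 * \<eta>) + \<eta> * G_f^2 / 2)"
    using round_loss_vs_tightened[OF _ w] by (intro sum_mono) (simp add: a_def)
  also have "\<dots> = (a 1 - a (Suc T)) / (2 * \<eta>) + real T * (\<eta> * G_f^2 / 2)"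
  proof -
    have "(\<Sum>t=1..T. a t - a (Suc t)) = a 1 - a (Suc T)"
      using sum_Suc_diff[of 1 T a] sum_negf[of "\<lambda>t. a (Suc t) - a t" "{1..T}"] by simp
    then show ?thesis by (simp add: sum.distrib sum_divide_distrib[symmetric])
  qed
  also have "\<dots> \<le> 2 * R^2 / \<eta> + real T * (\<eta> * G_f^2 / 2)"
  proof -
    have "norm (x 1) \<le> R" "norm w \<le> R" using x1_tightened w tightened_in_ball by auto
    then have "norm (x 1 - w) \<le> 2 * R" using norm_triangle_ineq4[of "x 1" w] by linarith
    then have "a 1 \<le> (2 * R)^2" unfolding a_def by (intro power_mono) auto
    moreover have "0 \<le> a (Suc T)" by (simp add: a_def)
    ultimately have "a 1 - a (Suc T) \<le> (2 * R)^2" by linarith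
    then have "(a 1 - a (Suc T)) / (2 * \<eta>) \<le> (2 * R)^2 / (2 * \<eta>)"
      using \<eta>_pos by (intro divide_right_mono) auto
    also have "\<dots> = 2 * R^2 / \<eta>" by (simp add: power2_eq_square)
    finally show ?thesis by linarith
  qed
  finally show ?thesis .
qed

lemma tightened_comparator:
  assumes "g u \<le> 0"
  obtains w where "w \<in> tightened" "\<And>t. t \<in> {1..T} \<Longrightarrow> f t w \<le> f t u + G_f * \<rho> / \<sigma>"
proof -
  obtain w where w: "w \<in> tightened" and dw: "infdist u tightened = dist u w"
    using infdist_attains_inf[OF closed_tightened] x1_tightened by blast
  have "max (g u + \<rho>) 0 \<le> \<rho>" using assms \<rho>_pos by simp
  then have "\<sigma> * infdist u tightened \<le> \<rho>" using sigma_infdist_tightened[of u] by linarith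
  then have "\<sigma> * norm (u - w) \<le> \<rho>" using dw by (simp add: dist_norm)
  then have uw: "norm (u - w) \<le> \<rho> / \<sigma>" using \<sigma>_pos by (simp add: field_simps)
  have "f t w \<le> f t u + G_f * \<rho> / \<sigma>" if t: "t \<in> {1..T}" for t
  proof -
    have "norm (df t w) \<le> G_f" using grad_bound[OF t] w tightened_in_ball by blast
    then have "norm (df t w) * norm (u - w) \<le> G_f * (\<rho> / \<sigma>)"
      using uw by (intro mult_mono) (auto intro: order_trans[OF norm_ge_zero])
    then have "- (G_f * \<rho> / \<sigma>) \<le> inner (df t w) (u - w)"
      using Cauchy_Schwarz_ineq2[of "df t w" "u - w"] by (simp add: abs_le_iff)
    then show ?thesis
      using convex_on_has_derivative_ge[OF f_convex f_grad, of t w u] by simp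
  qed
  then show ?thesis using that w by blast
qed

theorem regret_bound:
  "regret T f g x \<le> 2 * R^2 / \<eta> + real T * (\<eta> * G_f^2 / 2 + G_f * \<rho> / \<sigma>)"
proof -
  define B where "B = 2 * R^2 / \<eta> + real T * (\<eta> * G_f^2 / 2 + G_f * \<rho> / \<sigma>)"
  have "(\<Sum>t=1..T. f t (x t)) - B \<le> (\<Sum>t=1..T. f t u)" if gu: "g u \<le> 0" for u
  proof -
    obtain w where w: "w \<in> tightened" and fw: "\<And>t. t \<in> {1..T} \<Longrightarrow> f t w \<le> f t u + G_f * \<rho> / \<sigma>"
      using tightened_comparator[OF gu] by blast
    have "(\<Sum>t=1..T. f t w) \<le> (\<Sum>t=1..T. f t u) + real T * (G_f * \<rho> / \<sigma>)"
      using sum_mono[of "{1..T}", OF fw] by (simp add: sum.distrib)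
    then show ?thesis
      using cumulative_loss_vs_tightened[OF w] by (simp add: B_def sum_subtractf algebra_simps)
  qed
  moreover have "g (x 1) \<le> 0" using x1_tightened \<rho>_pos by (simp add: tightened_def)
  then have "{u. g u \<le> 0} \<noteq> {}" by blast
  ultimately have "(\<Sum>t=1..T. f t (x t)) - B \<le> (INF u\<in>{u. g u \<le> 0}. \<Sum>t=1..T. f t u)"
    by (intro cINF_greatest) auto
  then show ?thesis by (simp add: regret_def B_def)
qed

end

theorem corollary1:
  fixes g :: "'a::euclidean_space \<Rightarrow> real"
    and f :: "nat \<Rightarrow> 'a \<Rightarrow> real"
    and df :: "nat \<Rightarrow> 'a \<Rightarrow> 'a"
    and x s :: "nat \<Rightarrow> 'a"
    and T :: nat
    and R G_f G_g \<sigma> \<epsilon> \<alpha> \<rho> \<eta> \<gamma> \<xi> :: real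
  assumes T_pos: "T \<ge> 1"
    and g_convex: "convex_on UNIV g"
    and A1: "R > 0" "{u. g u \<le> 0} \<subseteq> cball 0 R"
    and A2_convex: "\<And>t. convex_on UNIV (f t)"
    and A2_grad: "\<And>t u. (f t has_derivative (\<lambda>h. inner (df t u) h)) (at u)"
    and A2_bound: "G_f > 0" "\<And>t u. t \<in> {1..T} \<Longrightarrow> u \<in> cball 0 R \<Longrightarrow> norm (df t u) \<le> G_f"
    and A3: "G_g > 0" "\<And>u v. u \<in> cball 0 R \<Longrightarrow> v \<in> subdiff g u \<Longrightarrow> norm v \<le> G_g"
    and A4: "\<sigma> > 0" "\<epsilon> > 0" "{u. g u = - \<epsilon>} \<noteq> {}"
            "\<And>u v. g u = - \<epsilon> \<Longrightarrow> v \<in> subdiff g u \<Longrightarrow> norm v \<ge> \<sigma>"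
    and gamma_def: "\<gamma> = 1 - \<sigma>^2 / G_g^2"
    and xi_def: "\<xi> = 1 - sqrt \<gamma>"
    and alpha: "0 < \<alpha>" "\<alpha> \<le> \<epsilon>"
    and init: "g (x 1) \<le> - \<alpha>"
    and rho_def: "\<rho> = \<alpha> / sqrt (real T)"
    and eta_def: "\<eta> = \<xi> * \<rho> / (G_f * G_g)"
    and subgr: "\<And>t. t \<in> {1..T} \<Longrightarrow> s t \<in> subdiff g (x t)"
    and step: "\<And>t. t \<in> {1..T} \<Longrightarrow>
                 x (t + 1) = polyak_step R g \<eta> \<rho> (df t (x t)) (s t) (x t)"
  shows "regret T f g x
           \<le> (2 * G_f * G_g * R^2 / (\<xi> * \<alpha>) + G_f * \<xi> * \<alpha> / (2 * G_g)
               + G_f * \<alpha> / \<sigma>) * sqrt (real T)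
         \<and> (\<forall>t\<in>{1..T}. g (x t) \<le> 0)"
proof -
  have rT: "1 \<le> sqrt (real T)" using T_pos by simp
  have \<rho>: "0 < \<rho>" "\<rho> \<le> \<alpha>"
    using alpha rT by (simp_all add: rho_def divide_le_eq)
  have \<xi>: "0 < \<xi>" using A4(1) A3(1) by (simp add: xi_def gamma_def)
  interpret polyak_ogd g f df x s T R G_f G_g \<sigma> \<epsilon> \<rho> \<eta>
  proof
    show "\<eta> * G_f \<le> (1 - sqrt (1 - \<sigma>^2 / G_g^2)) * \<rho> / G_g"
      using A2_bound(1) by (simp add: eta_def xi_def gamma_def)
  qed (use assms \<rho> \<xi> in \<open>auto simp: eta_def\<close>)
  have "regret T f g x \<le> 2 * R^2 / \<eta> + real T * (\<eta> * G_f^2 / 2 + G_f * \<rho> / \<sigma>)"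
    by (rule regret_bound)
  also have "\<dots> = (2 * G_f * G_g * R^2 / (\<xi> * \<alpha>) + G_f * \<xi> * \<alpha> / (2 * G_g)
                   + G_f * \<alpha> / \<sigma>) * sqrt (real T)"
  proof -
    define r where "r = sqrt (real T)"
    have "real T = r * r" by (simp add: r_def)
    moreover have "r > 0" using rT by (simp add: r_def)
    ultimately show ?thesis
      using \<xi> alpha A2_bound(1) A3(1) A4(1)
      by (simp add: eta_def rho_def r_def[symmetric] field_simps power2_eq_square)
  qed
  finally show ?thesis using iterates_feasible by blast
qed

end
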